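(* Let $\{(U_{k,i}, V_{k,i}); i \geq 1, k \geq 1\}$ be an array of i.i.d. two-dimensional random vectors and let $\{p_n; n \geq 1\}$ be a sequence of positive integers such that $n/p_n$ is bounded away from $0$ and $\infty$. Let $$T_n = \max_{1 \leq i \neq j \leq p_n} \Big| \sum_{k=1}^n U_{k,i} V_{k,j} \Big|, \quad n \geq 1.$$ Let $\{a_n; n \geq 1\}$ be a nondecreasing sequence of positive constants such that $\lim_{n \to \infty} a_{n+1}/a_n = 1$ and $\liminf_{n \to \infty} a_{2n}/a_n = b \in (1, \infty]$. If $$\limsup_{n \to \infty} \frac{T_n}{a_n} < \infty \quad \text{a.s.},$$ then $\sum_{n=1}^{\infty} P\big(\max_{1 \leq i \neq j \leq n} |U_{1,i} V_{1,j}| \geq a_n\big) < \infty$, and moreover $(EU_{1,1})(EV_{1,1}) = 0$ whenever $\lim_{n \to \infty} a_n/n = 0$. *)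

theory Defs
  imports "HOL-Probability.Probability"
begin

text \<open>The maximum over an empty index set (p_n < 2) is taken to be 0; since all
  terms are nonnegative, inserting 0 does not change the maximum otherwise.\<close>
definition Tstat :: "(nat \<Rightarrow> nat \<Rightarrow> 'a \<Rightarrow> real) \<Rightarrow> (nat \<Rightarrow> nat \<Rightarrow> 'a \<Rightarrow> real) \<Rightarrow> nat \<Rightarrow> nat \<Rightarrow> 'a \<Rightarrow> real"
  where "Tstat U V p n \<omega> =
    Max (insert 0 {\<bar>\<Sum>k=1..n. U k i \<omega> * V k j \<omega>\<bar> | i j.
                     i \<in> {1..p} \<and> j \<in> {1..p} \<and> i \<noteq> j})"

definition Mstat :: "(nat \<Rightarrow> nat \<Rightarrow> 'a \<Rightarrow> real) \<Rightarrow> (nat \<Rightarrow> nat \<Rightarrow> 'a \<Rightarrow> real) \<Rightarrow> nat \<Rightarrow> 'a \<Rightarrow> real"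
  where "Mstat U V n \<omega> =
    Max (insert 0 {\<bar>U 1 i \<omega> * V 1 j \<omega>\<bar> | i j.
                     i \<in> {1..n} \<and> j \<in> {1..n} \<and> i \<noteq> j})"

end

theory Submission
  imports Defs
begin

section \<open>Independence and the second Borel--Cantelli lemma\<close>

lemma (in prob_space) indep_sets_reindex:
  assumes "indep_sets F (\<phi> ` I)" "inj_on \<phi> I"
  shows "indep_sets (\<lambda>i. F (\<phi> i)) I"
proof (rule indep_setsI)
  show "F (\<phi> i) \<subseteq> events" if "i \<in> I" for i
    using assms(1) that unfolding indep_sets_def by auto
next
  fix A J assume J: "J \<noteq> {}" "J \<subseteq> I" "finite J" "\<forall>j\<in>J. A j \<in> F (\<phi> j)"
  define A' where "A' = (\<lambda>k. A (the_inv_into I \<phi> k))"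
  have inv: "the_inv_into I \<phi> (\<phi> j) = j" if "j \<in> J" for j
    using J(2) assms(2) that by (auto intro: the_inv_into_f_f)
  have "prob (\<Inter>j\<in>J. A j) = prob (\<Inter>k\<in>\<phi> ` J. A' k)"
    using inv by (auto simp: A'_def intro!: arg_cong[where f = prob])
  also have "\<dots> = (\<Prod>k\<in>\<phi> ` J. prob (A' k))"
    using J inv by (intro indep_setsD[OF assms(1)]) (auto simp: A'_def)
  also have "\<dots> = (\<Prod>j\<in>J. prob (A j))"
    using inv J assms(2) by (subst prod.reindex) (auto simp: A'_def intro: inj_on_subset)
  finally show "prob (\<Inter>j\<in>J. A j) = (\<Prod>j\<in>J. prob (A j))" .
qed

lemma (in prob_space) indep_vars_reindex:
  assumes "indep_vars M' X (\<phi> ` I)" "inj_on \<phi> I"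
  shows "indep_vars (\<lambda>i. M' (\<phi> i)) (\<lambda>i. X (\<phi> i)) I"
  using assms unfolding indep_vars_def2
  by (auto intro: indep_sets_reindex[where F = "\<lambda>i. {X i -` A \<inter> space M |A. A \<in> sets (M' i)}", simplified])

lemma (in prob_space) distr_iid_reindex:
  assumes indep: "indep_vars (\<lambda>_. N) X J" and ident: "\<And>j. j \<in> J \<Longrightarrow> distr M N (X j) = D"
    and I: "I \<noteq> {}" "inj_on \<phi> I" "\<phi> ` I \<subseteq> J"
  shows "distr M (\<Pi>\<^sub>M i\<in>I. N) (\<lambda>\<omega>. \<lambda>i\<in>I. X (\<phi> i) \<omega>) = (\<Pi>\<^sub>M i\<in>I. D)"
proof -
  have rv: "random_variable N (X (\<phi> i))" if "i \<in> I" for i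
    using indep I(3) that unfolding indep_vars_def by auto
  have "indep_vars (\<lambda>_. N) (\<lambda>i. X (\<phi> i)) I"
    using indep_vars_reindex[OF indep_vars_subset[OF indep I(3)] I(2)] .
  then have "distr M (\<Pi>\<^sub>M i\<in>I. N) (\<lambda>\<omega>. \<lambda>i\<in>I. X (\<phi> i) \<omega>) = (\<Pi>\<^sub>M i\<in>I. distr M N (X (\<phi> i)))"
    using indep_vars_iff_distr_eq_PiM'[OF I(1) rv] by simp
  also have "\<dots> = (\<Pi>\<^sub>M i\<in>I. D)"
    using I(3) ident by (intro PiM_cong) auto
  finally show ?thesis .
qed

lemma (in prob_space) indep_events_compl:
  assumes "indep_events A I"
  shows "indep_events (\<lambda>i. space M - A i) I"
proof -
  have "indep_sets (\<lambda>i. sigma_sets (space M) {A i}) I"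
    using assms unfolding indep_events_def_alt
    by (rule indep_sets_sigma) (auto simp: Int_stable_def)
  then show ?thesis
    unfolding indep_events_def_alt by (rule indep_sets_mono_sets) (auto intro: sigma_sets.intros)
qed

lemma (in prob_space) borel_cantelli_AE2:
  assumes indep: "indep_events A UNIV" and diverge: "\<not> summable (\<lambda>n. prob (A n))"
  shows "AE x in M. \<exists>\<^sub>F n in sequentially. x \<in> A n"
proof -
  have A: "A n \<in> events" for n
    using indep unfolding indep_events_def by auto
  have compl: "indep_events (\<lambda>n. space M - A n) UNIV"
    using indep by (rule indep_events_compl)
  have tail_bound: "prob (\<Inter>n\<in>{m..}. space M - A n) \<le> exp (- (\<Sum>n=m..N. prob (A n)))" for m N
  proof (cases "m \<le> N")
    case True
    have "prob (\<Inter>n\<in>{m..}. space M - A n) \<le> prob (\<Inter>n\<in>{m..N}. space M - A n)"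
      using A True by (intro finite_measure_mono) auto
    also have "\<dots> = (\<Prod>n=m..N. prob (space M - A n))"
      using compl True unfolding indep_events_def by auto
    also have "\<dots> = (\<Prod>n=m..N. 1 - prob (A n))"
      using A by (simp add: prob_compl)
    also have "\<dots> \<le> (\<Prod>n=m..N. exp (- prob (A n)))"
      by (intro prod_mono conjI) (use exp_ge_add_one_self[of "- prob (A _)"] in auto)
    also have "\<dots> = exp (- (\<Sum>n=m..N. prob (A n)))"
      by (simp add: exp_sum[symmetric] sum_negf)
    finally show ?thesis .
  qed simp
  have tail_null: "prob (\<Inter>n\<in>{m..}. space M - A n) = 0" for m
  proof (rule ccontr)
    define c where "c = prob (\<Inter>n\<in>{m..}. space M - A n)"
    assume "prob (\<Inter>n\<in>{m..}. space M - A n) \<noteq> 0"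
    then have "0 < c"
      unfolding c_def using measure_nonneg[of M] by (simp add: less_le)
    have partial: "(\<Sum>n=m..N. prob (A n)) \<le> - ln c" for N
    proof -
      have "c \<le> exp (- (\<Sum>n=m..N. prob (A n)))"
        using tail_bound[of m N] unfolding c_def .
      then show ?thesis
        using ln_mono[OF _ \<open>0 < c\<close>] by fastforce
    qed
    have "summable (\<lambda>n. prob (A n))"
    proof (rule summableI_nonneg_bounded)
      show "(\<Sum>n<N. prob (A n)) \<le> (\<Sum>n<m. prob (A n)) - ln c" for N
      proof -
        have "(\<Sum>n<N. prob (A n)) \<le> (\<Sum>n\<in>{..<m} \<union> {m..N}. prob (A n))"
          by (intro sum_mono2) auto
        also have "\<dots> = (\<Sum>n<m. prob (A n)) + (\<Sum>n=m..N. prob (A n))"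
          by (rule sum.union_disjoint) auto
        finally show ?thesis using partial[of N] by simp
      qed
    qed simp
    with diverge show False ..
  qed
  show ?thesis
  proof (rule AE_I')
    show "(\<Union>m. \<Inter>n\<in>{m..}. space M - A n) \<in> null_sets M"
      using tail_null A by (intro null_sets_UN) (simp add: null_sets_def emeasure_eq_measure sets.countable_INT')
    show "{x \<in> space M. \<not> (\<exists>\<^sub>F n in sequentially. x \<in> A n)} \<subseteq> (\<Union>m. \<Inter>n\<in>{m..}. space M - A n)"
      by (auto simp: frequently_def eventually_sequentially)
  qed
qed

section \<open>Identically distributed random variables\<close>

lemma integrable_comp_eq_if_distr_eq:
  assumes "X \<in> measurable M N" "Y \<in> measurable M N" "distr M N X = distr M N Y"
    and "(G :: _ \<Rightarrow> real) \<in> borel_measurable N"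
  shows "integrable M (\<lambda>\<omega>. G (X \<omega>)) \<longleftrightarrow> integrable M (\<lambda>\<omega>. G (Y \<omega>))"
  using integrable_distr_eq[OF assms(1,4)] integrable_distr_eq[OF assms(2,4)] assms(3) by simp

lemma integral_comp_eq_if_distr_eq:
  assumes "X \<in> measurable M N" "Y \<in> measurable M N" "distr M N X = distr M N Y"
    and "(G :: _ \<Rightarrow> real) \<in> borel_measurable N"
  shows "(\<integral>\<omega>. G (X \<omega>) \<partial>M) = (\<integral>\<omega>. G (Y \<omega>) \<partial>M)"
  using integral_distr[OF assms(1,4)] integral_distr[OF assms(2,4)] assms(3) by simp

lemma abs_average_le_truncation:
  fixes x :: "nat \<Rightarrow> real"
  assumes "0 \<le> K"
  shows "\<bar>(\<Sum>k=1..n. x k) / n\<bar> \<le> min \<bar>(\<Sum>k=1..n. x k) / n\<bar> K + (\<Sum>k=1..n. max 0 (\<bar>x k\<bar> - K)) / n"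
proof -
  have "\<bar>\<Sum>k=1..n. x k\<bar> \<le> (\<Sum>k=1..n. max 0 (\<bar>x k\<bar> - K) + K)"
    by (rule order_trans[OF sum_abs sum_mono]) auto
  then have "\<bar>(\<Sum>k=1..n. x k) / n\<bar> \<le> (\<Sum>k=1..n. max 0 (\<bar>x k\<bar> - K)) / n + K"
    using assms by (cases "n = 0") (auto simp: sum.distrib field_simps)
  moreover have "0 \<le> (\<Sum>k=1..n. max 0 (\<bar>x k\<bar> - K)) / n"
    by (intro divide_nonneg_nonneg sum_nonneg) auto
  ultimately show ?thesis
    by linarith
qed

lemma (in prob_space) abs_expectation_le_truncated_average:
  fixes X :: "nat \<Rightarrow> 'a \<Rightarrow> real"
  assumes X: "\<And>k. 1 \<le> k \<Longrightarrow> random_variable borel (X k)"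
    and ident: "\<And>k. 1 \<le> k \<Longrightarrow> distr M borel (X k) = distr M borel (X 1)"
    and int: "integrable M (X 1)"
    and "1 \<le> n" "0 \<le> K"
  shows "\<bar>expectation (X 1)\<bar>
    \<le> (\<integral>\<omega>. min \<bar>(\<Sum>k=1..n. X k \<omega>) / n\<bar> K \<partial>M) + (\<integral>\<omega>. max 0 (\<bar>X 1 \<omega>\<bar> - K) \<partial>M)"
proof -
  define excess where "excess k = (\<lambda>\<omega>. max 0 (\<bar>X k \<omega>\<bar> - K))" for k
  have [measurable]: "X k \<in> borel_measurable M" if "1 \<le> k" for k
    using X[OF that] by simp
  have "integrable M (excess 1)"
    unfolding excess_def using int by (intro integrable_max integrable_diff integrable_abs) auto
  then have int_X: "integrable M (X k)" and int_excess: "integrable M (excess k)"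
    and E_X: "expectation (X k) = expectation (X 1)" and E_excess: "expectation (excess k) = expectation (excess 1)"
    if "1 \<le> k" for k
    using int that integrable_comp_eq_if_distr_eq[OF X X ident, of k "\<lambda>x. x"]
      integrable_comp_eq_if_distr_eq[OF X X ident, of k "\<lambda>x. max 0 (\<bar>x\<bar> - K)"]
      integral_comp_eq_if_distr_eq[OF X X ident, of k "\<lambda>x. x"]
      integral_comp_eq_if_distr_eq[OF X X ident, of k "\<lambda>x. max 0 (\<bar>x\<bar> - K)"]
    by (simp_all add: excess_def)
  define Y where "Y = (\<lambda>\<omega>. (\<Sum>k=1..n. X k \<omega>) / n)"
  have [measurable]: "Y \<in> borel_measurable M"
    unfolding Y_def using X by (intro borel_measurable_divide borel_measurable_sum) auto
  have int_Y: "integrable M Y"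
    unfolding Y_def using int_X by (intro integrable_divide_zero integrable_sum) auto
  have int_trunc: "integrable M (\<lambda>\<omega>. min \<bar>Y \<omega>\<bar> K)"
  proof (rule Bochner_Integration.integrable_bound[where f = "\<lambda>_. K"])
    show "(\<lambda>\<omega>. min \<bar>Y \<omega>\<bar> K) \<in> borel_measurable M"
      by measurable
  qed (use \<open>0 \<le> K\<close> in auto)
  have int_excess_avg: "integrable M (\<lambda>\<omega>. (\<Sum>k=1..n. excess k \<omega>) / n)"
    using int_excess by (intro integrable_divide_zero integrable_sum) auto
  have "expectation Y = (\<Sum>k=1..n. expectation (X k)) / n"
    unfolding Y_def using int_X by (simp add: integral_sum)
  also have "\<dots> = (\<Sum>k=1..n. expectation (X 1)) / n"
    by (intro arg_cong2[where f = "(/)"] sum.cong refl E_X) simp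
  also have "\<dots> = expectation (X 1)"
    using \<open>1 \<le> n\<close> by simp
  finally have "\<bar>expectation (X 1)\<bar> \<le> expectation (\<lambda>\<omega>. \<bar>Y \<omega>\<bar>)"
    using integral_abs_bound[of M Y] by simp
  also have "\<dots> \<le> (\<integral>\<omega>. min \<bar>Y \<omega>\<bar> K + (\<Sum>k=1..n. excess k \<omega>) / n \<partial>M)"
    using integrable_abs[OF int_Y] int_trunc int_excess_avg abs_average_le_truncation[OF \<open>0 \<le> K\<close>]
    by (intro integral_mono) (auto simp: Y_def excess_def)
  also have "\<dots> = (\<integral>\<omega>. min \<bar>Y \<omega>\<bar> K \<partial>M) + (\<Sum>k=1..n. expectation (excess k)) / n"
    using int_trunc int_excess_avg int_excess by (simp add: integral_sum)
  also have "\<dots> = (\<integral>\<omega>. min \<bar>Y \<omega>\<bar> K \<partial>M) + (\<Sum>k=1..n. expectation (excess 1)) / n"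
    by (intro arg_cong2[where f = "(+)"] arg_cong2[where f = "(/)"] sum.cong refl E_excess) simp
  also have "\<dots> = (\<integral>\<omega>. min \<bar>Y \<omega>\<bar> K \<partial>M) + (\<integral>\<omega>. max 0 (\<bar>X 1 \<omega>\<bar> - K) \<partial>M)"
    using \<open>1 \<le> n\<close> by (simp add: excess_def)
  finally show ?thesis
    unfolding Y_def .
qed

lemma (in prob_space) expectation_eq_0_if_averages_tendsto_0:
  fixes X :: "nat \<Rightarrow> 'a \<Rightarrow> real"
  assumes X: "\<And>k. 1 \<le> k \<Longrightarrow> random_variable borel (X k)"
    and ident: "\<And>k. 1 \<le> k \<Longrightarrow> distr M borel (X k) = distr M borel (X 1)"
    and int: "integrable M (X 1)"
    and averages: "AE \<omega> in M. (\<lambda>n. (\<Sum>k=1..n. X k \<omega>) / n) \<longlonglongrightarrow> 0"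
  shows "expectation (X 1) = 0"
proof -
  define excess where "excess K = (\<lambda>\<omega>. max 0 (\<bar>X 1 \<omega>\<bar> - K))" for K :: real
  have [measurable]: "X 1 \<in> borel_measurable M"
    using X[of 1] by simp
  have [measurable]: "(\<lambda>\<omega>. (\<Sum>k=1..n. X k \<omega>) / n) \<in> borel_measurable M" for n
    using X by (intro borel_measurable_divide borel_measurable_sum) auto
  have "\<bar>expectation (X 1)\<bar> \<le> expectation (excess K)" if "0 \<le> K" for K
  proof (rule tendsto_lowerbound)
    have "(\<lambda>n. \<integral>\<omega>. min \<bar>(\<Sum>k=1..n. X k \<omega>) / n\<bar> K \<partial>M) \<longlonglongrightarrow> (\<integral>\<omega>. 0 \<partial>M)"
    proof (rule integral_dominated_convergence[where w = "\<lambda>_. K"])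
      show "AE \<omega> in M. (\<lambda>n. min \<bar>(\<Sum>k=1..n. X k \<omega>) / n\<bar> K) \<longlonglongrightarrow> 0"
        using averages
      proof eventually_elim
        case (elim \<omega>)
        then have "(\<lambda>n. min \<bar>(\<Sum>k=1..n. X k \<omega>) / n\<bar> K) \<longlonglongrightarrow> min \<bar>0\<bar> K"
          by (intro tendsto_min tendsto_rabs tendsto_const)
        with that show ?case
          by simp
      qed
      show "(\<lambda>\<omega>. min \<bar>(\<Sum>k=1..n. X k \<omega>) / n\<bar> K) \<in> borel_measurable M" for n
        by measurable
    qed (use that in auto)
    then show "(\<lambda>n. (\<integral>\<omega>. min \<bar>(\<Sum>k=1..n. X k \<omega>) / n\<bar> K \<partial>M) + expectation (excess K))
        \<longlonglongrightarrow> expectation (excess K)"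
      using tendsto_add[OF _ tendsto_const] by fastforce
    show "\<forall>\<^sub>F n in sequentially.
        \<bar>expectation (X 1)\<bar> \<le> (\<integral>\<omega>. min \<bar>(\<Sum>k=1..n. X k \<omega>) / n\<bar> K \<partial>M) + expectation (excess K)"
      unfolding excess_def
      using abs_expectation_le_truncated_average[of X, OF X ident int _ that]
      by (intro eventually_sequentiallyI[of 1]) simp
  qed simp
  moreover have "(\<lambda>K::nat. expectation (excess K)) \<longlonglongrightarrow> (\<integral>\<omega>. 0 \<partial>M)"
  proof (rule integral_dominated_convergence[where w = "\<lambda>\<omega>. \<bar>X 1 \<omega>\<bar>"])
    show "AE \<omega> in M. (\<lambda>K::nat. excess K \<omega>) \<longlonglongrightarrow> 0"
    proof (rule AE_I2)
      fix \<omega>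
      have "\<forall>\<^sub>F K in sequentially. excess (real K) \<omega> = 0"
        unfolding excess_def by (intro eventually_sequentiallyI[of "nat \<lceil>\<bar>X 1 \<omega>\<bar>\<rceil>"]) linarith
      then show "(\<lambda>K::nat. excess K \<omega>) \<longlonglongrightarrow> 0"
        by (rule tendsto_eventually)
    qed
  qed (use int in \<open>auto simp: excess_def\<close>)
  ultimately have "\<bar>expectation (X 1)\<bar> \<le> 0"
    by (intro tendsto_lowerbound[of "\<lambda>K::nat. expectation (excess K)"]) auto
  then show ?thesis
    by simp
qed

lemma summable_comp_div:
  fixes g :: "nat \<Rightarrow> real"
  assumes "0 < K" "\<And>n. 0 \<le> g n" "summable g"
  shows "summable (\<lambda>n. g (n div K))"
proof (rule summableI_nonneg_bounded)
  fix N
  have "(\<Sum>n<N. g (n div K)) \<le> (\<Sum>n<N * K. g (n div K))"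
    using assms(1,2) by (intro sum_mono2) auto
  also have "\<dots> = (\<Sum>m<N. \<Sum>n\<in>{m * K..<m * K + K}. g (n div K))"
    by (rule sum.nat_group[symmetric])
  also have "\<dots> = (\<Sum>m<N. real K * g m)"
  proof (intro sum.cong refl)
    fix m
    have "n div K = m" if "n \<in> {m * K..<m * K + K}" for n
      using that by (intro div_nat_eqI) (auto simp: mult.commute)
    then show "(\<Sum>n\<in>{m * K..<m * K + K}. g (n div K)) = real K * g m"
      by simp
  qed
  also have "\<dots> \<le> real K * suminf g"
    unfolding sum_distrib_left[symmetric]
    by (intro mult_left_mono sum_le_suminf) (use assms(2,3) in auto)
  finally show "(\<Sum>n<N. g (n div K)) \<le> real K * suminf g" .
qed (use assms(2) in simp)

lemma iterated_doubling:
  fixes a :: "nat \<Rightarrow> real"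
  assumes doubling: "\<And>n. N \<le> n \<Longrightarrow> \<beta> * a n \<le> a (2 * n)" and "0 < \<beta>" "N \<le> m"
  shows "\<beta> ^ s * a m \<le> a (2 ^ s * m)"
proof (induction s)
  case (Suc s)
  have "N \<le> 2 ^ s * m"
    using \<open>N \<le> m\<close> by (metis le_trans mult_le_mono1 mult_1 one_le_numeral one_le_power)
  have "\<beta> ^ Suc s * a m \<le> \<beta> * a (2 ^ s * m)"
    using Suc \<open>0 < \<beta>\<close> by (simp add: mult.assoc)
  also have "\<dots> \<le> a (2 * (2 ^ s * m))"
    using doubling[OF \<open>N \<le> 2 ^ s * m\<close>] .
  finally show ?case
    by (simp add: mult.assoc)
qed simp

lemma le_nat_ceiling_mult_block:
  fixes K m n h :: nat
  assumes "n < K * (m + 1)" "1 \<le> m" "0 < c" "c * real m \<le> real h"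
  shows "n \<le> nat \<lceil>2 * real K / c\<rceil> * h"
proof -
  have "n < K * m + K" "K \<le> K * m"
    using assms(1,2) by simp_all
  then have "n \<le> 2 * (K * m)"
    by linarith
  then have "real n \<le> 2 * real K * real m"
    by (metis mult.assoc of_nat_le_iff of_nat_mult of_nat_numeral)
  also have "\<dots> = (2 * real K / c) * (c * real m)"
    using assms(3) by simp
  also have "\<dots> \<le> real (nat \<lceil>2 * real K / c\<rceil>) * real h"
  proof (rule mult_mono)
    show "2 * real K / c \<le> real (nat \<lceil>2 * real K / c\<rceil>)"
      by (rule real_nat_ceiling_ge)
    show "0 \<le> real (nat \<lceil>2 * real K / c\<rceil>)"
      by (rule of_nat_0_le_iff)
  qed (use assms(3,4) in simp_all)
  finally show ?thesis
    by (simp flip: of_nat_mult)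
qed

text \<open>Row \<open>n\<close> is compared with row \<open>m = n div 2\<^sup>r\<close>: \<open>r\<close> doublings give
  \<open>C a\<^sub>m \<le> a\<^sub>n\<close>, and \<open>{1..n}\<close> is covered by boundedly many blocks of size \<open>h m\<close>.\<close>

lemma summable_transfer_doubling:
  fixes F :: "nat \<Rightarrow> real \<Rightarrow> real" and a :: "nat \<Rightarrow> real" and h :: "nat \<Rightarrow> nat"
  assumes F_nonneg: "\<And>m x. 0 \<le> F m x"
    and F_antimono: "\<And>m x y. x \<le> y \<Longrightarrow> F m y \<le> F m x"
    and F_block: "\<And>m L h x. m \<le> L * h \<Longrightarrow> F m x \<le> real (L * L) * F (2 * h) x"
    and summable_blocks: "summable (\<lambda>n. F (2 * h n) (C * a n))"
    and a_pos: "\<And>n. 1 \<le> n \<Longrightarrow> 0 < a n"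
    and a_mono: "\<And>m n. 1 \<le> m \<Longrightarrow> m \<le> n \<Longrightarrow> a m \<le> a n"
    and doubling: "1 < \<beta>" "\<forall>\<^sub>F n in sequentially. \<beta> * a n \<le> a (2 * n)"
    and h_linear: "0 < c" "\<forall>\<^sub>F n in sequentially. c * real n \<le> real (h n)"
  shows "summable (\<lambda>n. F n (a n))"
proof -
  obtain r where r: "C < \<beta> ^ r"
    using real_arch_pow[OF doubling(1)] by blast
  define K :: nat where "K = 2 ^ r"
  define L :: nat where "L = nat \<lceil>2 * real K / c\<rceil>"
  obtain N where N: "1 \<le> N" "\<And>n. N \<le> n \<Longrightarrow> \<beta> * a n \<le> a (2 * n) \<and> c * real n \<le> real (h n)"
    using eventually_conj[OF doubling(2) h_linear(2)]
    unfolding eventually_sequentially by (metis le_cases order.trans one_le_numeral)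
  have bound: "F n (a n) \<le> real (L * L) * F (2 * h (n div K)) (C * a (n div K))"
    if "K * N \<le> n" for n
  proof -
    define m where "m = n div K"
    have "N \<le> m"
      unfolding m_def using div_le_mono[OF that, of K] by (simp add: K_def)
    then have m: "1 \<le> m" "c * real m \<le> real (h m)"
      using N by auto
    have "K * m \<le> n" "n < K * (m + 1)"
      unfolding m_def using dividend_less_times_div[of K n] by (simp_all add: K_def)
    have "C * a m \<le> \<beta> ^ r * a m"
      using r a_pos[OF m(1)] by simp
    also have "\<dots> \<le> a (K * m)"
      unfolding K_def using iterated_doubling[of N \<beta> a, OF _ _ \<open>N \<le> m\<close>] N(2) doubling(1) by simp
    also have "\<dots> \<le> a n"
      using \<open>K * m \<le> n\<close> m(1) by (intro a_mono) (auto simp: K_def)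
    finally have "F n (a n) \<le> F n (C * a m)"
      by (rule F_antimono)
    also have "\<dots> \<le> real (L * L) * F (2 * h m) (C * a m)"
      using \<open>n < K * (m + 1)\<close> m h_linear(1) unfolding L_def
      by (intro F_block le_nat_ceiling_mult_block)
    finally show ?thesis
      unfolding m_def .
  qed
  have "summable (\<lambda>n. real (L * L) * F (2 * h (n div K)) (C * a (n div K)))"
    using summable_mult[OF summable_blocks, of "real (L * L)"] F_nonneg
    by (intro summable_comp_div[where g = "\<lambda>m. real (L * L) * F (2 * h m) (C * a m)"]) (auto simp: K_def)
  then show ?thesis
    by (rule summable_comparison_test'[where N = "K * N"]) (use bound F_nonneg in auto)
qed

lemma limsup_lt_infinity_imp_eventually_le:
  fixes t a :: "nat \<Rightarrow> real"
  assumes "limsup (\<lambda>n. ereal (t n / a n)) < \<infinity>" "\<forall>\<^sub>F n in sequentially. 0 < a n"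
  shows "\<exists>B>0. \<forall>\<^sub>F n in sequentially. t n \<le> B * a n"
proof -
  obtain B where "limsup (\<lambda>n. ereal (t n / a n)) < ereal B"
    using ereal_dense2[OF assms(1)] by blast
  then have "\<forall>\<^sub>F n in sequentially. t n / a n < B"
    using Limsup_lessD by fastforce
  with assms(2) have "\<forall>\<^sub>F n in sequentially. t n \<le> max B 1 * a n"
    by eventually_elim (simp add: divide_less_eq max_mult_distrib_right)
  then show ?thesis
    by (intro exI[of _ "max B 1"]) auto
qed

lemma eventually_doubling_if_liminf_gt_1:
  fixes a :: "nat \<Rightarrow> real"
  assumes "liminf (\<lambda>n. ereal (a (2 * n) / a n)) > 1" "\<forall>\<^sub>F n in sequentially. 0 < a n"
  shows "\<exists>\<beta>>1. \<forall>\<^sub>F n in sequentially. \<beta> * a n \<le> a (2 * n)"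
proof -
  obtain \<beta> where \<beta>: "1 < ereal \<beta>" "ereal \<beta> < liminf (\<lambda>n. ereal (a (2 * n) / a n))"
    using ereal_dense2[OF assms(1)] by blast
  then have "\<forall>\<^sub>F n in sequentially. \<beta> < a (2 * n) / a n"
    using less_LiminfD by fastforce
  with assms(2) have "\<forall>\<^sub>F n in sequentially. \<beta> * a n \<le> a (2 * n)"
    by eventually_elim (simp add: less_divide_eq)
  with \<beta>(1) show ?thesis
    by auto
qed

lemma linear_block_sizes:
  fixes p :: "nat \<Rightarrow> nat"
  assumes "0 < C" "\<And>n. 1 \<le> n \<Longrightarrow> 0 < p n" "\<And>n. 1 \<le> n \<Longrightarrow> real n / real (p n) \<le> C"
  shows "\<exists>h :: nat \<Rightarrow> nat. \<exists>c>0. (\<forall>\<^sub>F n in sequentially. c * real n \<le> real (h n))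
    \<and> (\<forall>\<^sub>F n in sequentially. 2 * h n \<le> p n \<and> 2 * h n \<le> p (n - 1))"
proof (intro exI conjI)
  have p_lower: "real n / C \<le> real (p n)" if "1 \<le> n" for n
    using assms(1) assms(2,3)[OF that] by (simp add: divide_le_eq mult.commute)
  define h where "h n = nat \<lfloor>real n / (4 * C)\<rfloor>" for n
  have h_le: "real (h n) \<le> real n / (4 * C)" for n
    unfolding h_def using assms(1) by (simp add: of_nat_nat)
  show "0 < 1 / (8 * C)"
    using assms(1) by simp
  show "\<forall>\<^sub>F n in sequentially. 1 / (8 * C) * real n \<le> real (h n)"
  proof (intro eventually_sequentiallyI[of "nat \<lceil>8 * C\<rceil>"])
    fix n assume "nat \<lceil>8 * C\<rceil> \<le> n"
    then have "8 * C \<le> real n"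
      by linarith
    moreover have "real n / (4 * C) - 1 \<le> real (h n)"
      unfolding h_def using assms(1) by (simp add: of_nat_nat)
    ultimately show "1 / (8 * C) * real n \<le> real (h n)"
      using assms(1) by (simp add: field_simps)
  qed
  show "\<forall>\<^sub>F n in sequentially. 2 * h n \<le> p n \<and> 2 * h n \<le> p (n - 1)"
  proof (intro eventually_sequentiallyI[of 2])
    fix n :: nat assume "2 \<le> n"
    then have "real n / C \<le> real (p n)" "real (n - 1) / C \<le> real (p (n - 1))"
      using p_lower[of n] p_lower[of "n - 1"] by auto
    moreover have "real (2 * h n) \<le> real (n - 1) / C" "real (n - 1) \<le> real n"
      using h_le[of n] \<open>2 \<le> n\<close> assms(1) by (simp_all add: field_simps)
    ultimately show "2 * h n \<le> p n \<and> 2 * h n \<le> p (n - 1)"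
      using assms(1) by (smt (verit) divide_right_mono of_nat_le_iff)
  qed
qed

lemma atLeastAtMost_subset_blocks:
  fixes m h :: nat
  assumes "m \<le> L * h"
  shows "{1..m} \<subseteq> (\<Union>s<L. {s * h + 1..s * h + h})"
proof
  fix r assume r: "r \<in> {1..m}"
  then have "0 < h" "r - 1 < L * h"
    using assms by (auto intro: gr0I)
  define s where "s = (r - 1) div h"
  have "s * h \<le> r - 1"
    unfolding s_def by (rule div_times_less_eq_dividend)
  moreover have "r - 1 < h + s * h"
    unfolding s_def using \<open>0 < h\<close> by (rule dividend_less_div_times)
  moreover have "s < L"
    unfolding s_def using \<open>0 < h\<close> \<open>r - 1 < L * h\<close> by (simp add: div_less_iff_less_mult)
  ultimately have "r \<in> {s * h + 1..s * h + h}"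
    using r by auto
  with \<open>s < L\<close> show "r \<in> (\<Union>s<L. {s * h + 1..s * h + h})"
    by blast
qed

section \<open>Off-diagonal products\<close>

definition offdiag_exceeds :: "(nat \<Rightarrow> real \<times> real) \<Rightarrow> nat set \<Rightarrow> real \<Rightarrow> bool" where
  "offdiag_exceeds y S x \<longleftrightarrow> (\<exists>i\<in>S. \<exists>j\<in>S. i \<noteq> j \<and> x \<le> \<bar>fst (y i) * snd (y j)\<bar>)"

lemma offdiag_exceeds_mono:
  "offdiag_exceeds y S x \<Longrightarrow> S \<subseteq> S' \<Longrightarrow> x' \<le> x \<Longrightarrow> offdiag_exceeds y S' x'"
  unfolding offdiag_exceeds_def by force

lemma offdiag_exceeds_reindex:
  "inj_on \<psi> I \<Longrightarrow> offdiag_exceeds (\<lambda>i. y (\<psi> i)) I x \<longleftrightarrow> offdiag_exceeds y (\<psi> ` I) x"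
  unfolding offdiag_exceeds_def by (auto simp: inj_on_eq_iff)

lemma offdiag_exceeds_cong:
  "(\<And>i. i \<in> S \<Longrightarrow> y i = y' i) \<Longrightarrow> offdiag_exceeds y S x \<longleftrightarrow> offdiag_exceeds y' S x"
  unfolding offdiag_exceeds_def by auto

lemma sets_offdiag_exceeds:
  assumes "\<And>i. i \<in> S \<Longrightarrow> f i \<in> borel_measurable N"
  shows "{\<omega> \<in> space N. offdiag_exceeds (\<lambda>i. f i \<omega>) S x} \<in> sets N"
proof -
  have fst: "fst \<in> borel_measurable (borel :: (real \<times> real) measure)"
    and snd: "snd \<in> borel_measurable (borel :: (real \<times> real) measure)"
    unfolding borel_prod[symmetric] by measurable
  define E where "E i j = {\<omega> \<in> space N. x \<le> \<bar>fst (f i \<omega>) * snd (f j \<omega>)\<bar>}" for i j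
  have "E i j \<in> sets N" if "i \<in> S" "j \<in> S" for i j
  proof -
    have "(\<lambda>\<omega>. \<bar>fst (f i \<omega>) * snd (f j \<omega>)\<bar>) \<in> borel_measurable N"
      using measurable_compose[OF assms[OF that(1)] fst] measurable_compose[OF assms[OF that(2)] snd]
      by (intro borel_measurable_abs borel_measurable_times) (simp_all add: comp_def)
    then show ?thesis
      unfolding E_def by measurable
  qed
  then have "(\<Union>(i, j)\<in>{(i, j). i \<in> S \<and> j \<in> S \<and> i \<noteq> j}. E i j) \<in> sets N"
    by (intro sets.countable_UN) auto
  also have "(\<Union>(i, j)\<in>{(i, j). i \<in> S \<and> j \<in> S \<and> i \<noteq> j}. E i j)
      = {\<omega> \<in> space N. offdiag_exceeds (\<lambda>i. f i \<omega>) S x}"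
    unfolding offdiag_exceeds_def E_def by auto
  finally show ?thesis .
qed

lemma offdiag_set_eq_image:
  "{g i j | i j. i \<in> S \<and> j \<in> S \<and> i \<noteq> j} = (\<lambda>(i, j). g i j) ` {(i, j). i \<in> S \<and> j \<in> S \<and> i \<noteq> j}"
  by auto

lemma finite_offdiag_image:
  "finite S \<Longrightarrow> finite {g i j | i j. i \<in> S \<and> j \<in> S \<and> i \<noteq> j}"
  unfolding offdiag_set_eq_image
  by (rule finite_imageI, rule finite_subset[of _ "S \<times> S"]) auto

lemma offdiag_Max_ge_iff:
  fixes g :: "nat \<Rightarrow> nat \<Rightarrow> real"
  assumes "finite S" "0 < x"
  shows "x \<le> Max (insert 0 {\<bar>g i j\<bar> | i j. i \<in> S \<and> j \<in> S \<and> i \<noteq> j})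
     \<longleftrightarrow> (\<exists>i\<in>S. \<exists>j\<in>S. i \<noteq> j \<and> x \<le> \<bar>g i j\<bar>)"
proof -
  let ?A = "{\<bar>g i j\<bar> | i j. i \<in> S \<and> j \<in> S \<and> i \<noteq> j}"
  have "x \<le> Max (insert 0 ?A) \<longleftrightarrow> (\<exists>a\<in>insert 0 ?A. x \<le> a)"
    using finite_offdiag_image[OF assms(1)] by (intro Max_ge_iff) simp_all
  also have "\<dots> \<longleftrightarrow> (\<exists>a\<in>?A. x \<le> a)"
    using assms(2) by simp
  also have "\<dots> \<longleftrightarrow> (\<exists>i\<in>S. \<exists>j\<in>S. i \<noteq> j \<and> x \<le> \<bar>g i j\<bar>)"
    by blast
  finally show ?thesis .
qed

lemma Mstat_ge_iff:
  "0 < x \<Longrightarrow> x \<le> Mstat U V n \<omega> \<longleftrightarrow> offdiag_exceeds (\<lambda>i. (U 1 i \<omega>, V 1 i \<omega>)) {1..n} x"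
  unfolding Mstat_def offdiag_exceeds_def by (subst offdiag_Max_ge_iff) auto

lemma abs_sum_le_Tstat:
  assumes "i \<in> {1..p}" "j \<in> {1..p}" "i \<noteq> j"
  shows "\<bar>\<Sum>k=1..n. U k i \<omega> * V k j \<omega>\<bar> \<le> Tstat U V p n \<omega>"
  unfolding Tstat_def using assms finite_offdiag_image[of "{1..p}" "\<lambda>i j. \<bar>\<Sum>k=1..n. U k i \<omega> * V k j \<omega>\<bar>"]
  by (intro Max_ge) auto

lemma abs_cell_product_le_Tstat:
  assumes "i \<in> {1..q}" "j \<in> {1..q}" "i \<noteq> j" "q \<le> p" "q \<le> p'"
  shows "\<bar>U (Suc m) i \<omega> * V (Suc m) j \<omega>\<bar> \<le> Tstat U V p (Suc m) \<omega> + Tstat U V p' m \<omega>"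
proof -
  have "\<bar>U (Suc m) i \<omega> * V (Suc m) j \<omega>\<bar>
      = \<bar>(\<Sum>k=1..Suc m. U k i \<omega> * V k j \<omega>) - (\<Sum>k=1..m. U k i \<omega> * V k j \<omega>)\<bar>"
    by simp
  also have "\<dots> \<le> \<bar>\<Sum>k=1..Suc m. U k i \<omega> * V k j \<omega>\<bar> + \<bar>\<Sum>k=1..m. U k i \<omega> * V k j \<omega>\<bar>"
    by (rule abs_triangle_ineq4)
  also have "\<dots> \<le> Tstat U V p (Suc m) \<omega> + Tstat U V p' m \<omega>"
    using assms by (intro add_mono abs_sum_le_Tstat) auto
  finally show ?thesis .
qed

lemma eventually_not_offdiag_exceeds_if_Tstat_le:
  assumes T: "\<forall>\<^sub>F n in sequentially. Tstat U V (p n) n \<omega> \<le> B * a n" and "0 \<le> B"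
    and q: "\<forall>\<^sub>F n in sequentially. q n \<le> p n \<and> q n \<le> p (n - 1)"
    and a: "\<forall>\<^sub>F n in sequentially. 0 < a n \<and> a (n - 1) \<le> a n"
  shows "\<forall>\<^sub>F n in sequentially.
    \<not> offdiag_exceeds (\<lambda>i. (U n i \<omega>, V n i \<omega>)) {1..q n} ((2 * B + 1) * a n)"
proof -
  obtain N where "\<And>n. N \<le> n \<Longrightarrow> Tstat U V (p n) n \<omega> \<le> B * a n"
    using T by (auto simp: eventually_sequentially)
  then have "\<forall>\<^sub>F n in sequentially. Tstat U V (p (n - 1)) (n - 1) \<omega> \<le> B * a (n - 1)"
    by (intro eventually_sequentiallyI[of "Suc N"]) auto
  with T q a eventually_gt_at_top[of 0] show ?thesis
  proof eventually_elim
    case (elim n)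
    then obtain m where m: "n = Suc m"
      using gr0_implies_Suc by blast
    have "\<bar>U n i \<omega> * V n j \<omega>\<bar> < (2 * B + 1) * a n" if "i \<in> {1..q n}" "j \<in> {1..q n}" "i \<noteq> j" for i j
    proof -
      have "\<bar>U n i \<omega> * V n j \<omega>\<bar> \<le> B * a n + B * a (n - 1)"
        using abs_cell_product_le_Tstat[OF that, of "p n" "p m" U m \<omega> V] elim unfolding m by simp
      also have "\<dots> \<le> 2 * B * a n"
        using elim \<open>0 \<le> B\<close> mult_left_mono[of "a (n - 1)" "a n" B] by simp
      also have "\<dots> < (2 * B + 1) * a n"
        using elim by (simp add: distrib_right)
      finally show ?thesis .
    qed
    then show ?case
      unfolding offdiag_exceeds_def by (auto simp: not_le) (meson atLeastAtMost_iff not_less)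
  qed
qed

lemma averages_tendsto_0_if_Tstat_le:
  assumes T: "\<forall>\<^sub>F n in sequentially. Tstat U V (p n) n \<omega> \<le> B * a n"
    and p: "\<forall>\<^sub>F n in sequentially. 2 \<le> p n"
    and a: "(\<lambda>n. a n / n) \<longlonglongrightarrow> 0"
  shows "(\<lambda>n. (\<Sum>k=1..n. U k 1 \<omega> * V k 2 \<omega>) / n) \<longlonglongrightarrow> 0"
proof (rule Lim_null_comparison)
  show "\<forall>\<^sub>F n in sequentially. norm ((\<Sum>k=1..n. U k 1 \<omega> * V k 2 \<omega>) / n) \<le> B * (a n / n)"
    using T p
  proof eventually_elim
    case (elim n)
    have "\<bar>\<Sum>k=1..n. U k 1 \<omega> * V k 2 \<omega>\<bar> \<le> Tstat U V (p n) n \<omega>"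
      by (rule abs_sum_le_Tstat) (use elim in auto)
    with elim have "\<bar>\<Sum>k=1..n. U k 1 \<omega> * V k 2 \<omega>\<bar> \<le> B * a n"
      by linarith
    then show ?case
      by (simp add: divide_right_mono)
  qed
  show "(\<lambda>n. B * (a n / n)) \<longlonglongrightarrow> 0"
    using tendsto_mult_right_zero[OF a] by simp
qed

section \<open>The i.i.d. array\<close>

locale iid_pair_array = prob_space M for M :: "'a measure" +
  fixes U V :: "nat \<Rightarrow> nat \<Rightarrow> 'a \<Rightarrow> real"
  assumes indep: "indep_vars (\<lambda>_. borel :: (real \<times> real) measure)
                  (\<lambda>(k, i) \<omega>. (U k i \<omega>, V k i \<omega>)) {(k, i). 1 \<le> k \<and> 1 \<le> i}"
    and ident: "\<And>k i. 1 \<le> k \<Longrightarrow> 1 \<le> i \<Longrightarrow>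
                  distr M (borel :: (real \<times> real) measure) (\<lambda>\<omega>. (U k i \<omega>, V k i \<omega>)) =
                  distr M (borel :: (real \<times> real) measure) (\<lambda>\<omega>. (U 1 1 \<omega>, V 1 1 \<omega>))"
begin

definition cell :: "nat \<times> nat \<Rightarrow> 'a \<Rightarrow> real \<times> real" where
  "cell = (\<lambda>(k, i) \<omega>. (U k i \<omega>, V k i \<omega>))"

definition cells :: "(nat \<times> nat) set" where
  "cells = {(k, i). 1 \<le> k \<and> 1 \<le> i}"

definition cell_distr :: "(real \<times> real) measure" where
  "cell_distr = distr M borel (cell (1, 1))"

lemma cell_apply [simp]: "cell (k, i) \<omega> = (U k i \<omega>, V k i \<omega>)"
  by (simp add: cell_def)

lemma mem_cells [simp]: "(k, i) \<in> cells \<longleftrightarrow> 1 \<le> k \<and> 1 \<le> i"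
  by (simp add: cells_def)

lemma indep_cells: "indep_vars (\<lambda>_. borel) cell cells"
  using indep unfolding cell_def cells_def .

lemma distr_cell:
  assumes "c \<in> cells"
  shows "distr M borel (cell c) = cell_distr"
proof -
  obtain k i where "c = (k, i)" "1 \<le> k" "1 \<le> i"
    using assms by (cases c) auto
  then show ?thesis
    using ident[of k i] unfolding cell_distr_def cell_def by simp
qed

lemma measurable_cell [measurable]: "c \<in> cells \<Longrightarrow> cell c \<in> borel_measurable M"
  using indep_cells unfolding indep_vars_def by auto

lemma measurable_U_V [measurable]:
  assumes "1 \<le> k" "1 \<le> i"
  shows "U k i \<in> borel_measurable M" "V k i \<in> borel_measurable M"
proof -
  have "cell (k, i) \<in> measurable M (borel \<Otimes>\<^sub>M borel)"
    using measurable_cell[of "(k, i)"] assms by (simp add: borel_prod)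
  then have "(\<lambda>\<omega>. fst (cell (k, i) \<omega>)) \<in> borel_measurable M" "(\<lambda>\<omega>. snd (cell (k, i) \<omega>)) \<in> borel_measurable M"
    by measurable
  then show "U k i \<in> borel_measurable M" "V k i \<in> borel_measurable M"
    by simp_all
qed

lemma distr_cells_reindex:
  assumes "I \<noteq> {}" "inj_on \<phi> I" "\<phi> ` I \<subseteq> cells"
  shows "distr M (\<Pi>\<^sub>M i\<in>I. borel) (\<lambda>\<omega>. \<lambda>i\<in>I. cell (\<phi> i) \<omega>) = (\<Pi>\<^sub>M i\<in>I. cell_distr)"
  using distr_iid_reindex[OF indep_cells distr_cell assms] .

lemma sets_row_exceeds:
  assumes "1 \<le> k" "S \<subseteq> {1..}"
  shows "{\<omega> \<in> space M. offdiag_exceeds (\<lambda>i. cell (k, i) \<omega>) S x} \<in> events"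
  using assms by (intro sets_offdiag_exceeds) auto

lemma prob_row_exceeds_eq_PiM:
  assumes "1 \<le> k" "I \<noteq> {}" "inj_on \<psi> I" "\<psi> ` I \<subseteq> {1..}"
  shows "prob {\<omega> \<in> space M. offdiag_exceeds (\<lambda>i. cell (k, i) \<omega>) (\<psi> ` I) x}
       = measure (\<Pi>\<^sub>M i\<in>I. cell_distr) {y \<in> space (\<Pi>\<^sub>M i\<in>I. borel). offdiag_exceeds y I x}"
proof -
  define Y where "Y \<omega> = (\<lambda>i\<in>I. cell (k, \<psi> i) \<omega>)" for \<omega>
  define A where "A = {y \<in> space (\<Pi>\<^sub>M i\<in>I. borel). offdiag_exceeds y I x}"
  have Y: "Y \<in> measurable M (\<Pi>\<^sub>M i\<in>I. borel)"
    unfolding Y_def using assms by (intro measurable_restrict measurable_cell) auto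
  have A: "A \<in> sets (\<Pi>\<^sub>M i\<in>I. borel)"
    unfolding A_def by (intro sets_offdiag_exceeds) auto
  have "offdiag_exceeds (Y \<omega>) I x \<longleftrightarrow> offdiag_exceeds (\<lambda>i. cell (k, i) \<omega>) (\<psi> ` I) x" for \<omega>
    using offdiag_exceeds_reindex[OF assms(3), of "\<lambda>i. cell (k, i) \<omega>"]
      offdiag_exceeds_cong[of I "Y \<omega>" "\<lambda>i. cell (k, \<psi> i) \<omega>"]
    by (simp add: Y_def)
  then have "{\<omega> \<in> space M. offdiag_exceeds (\<lambda>i. cell (k, i) \<omega>) (\<psi> ` I) x} = Y -` A \<inter> space M"
    using measurable_space[OF Y] by (auto simp: A_def)
  then have "prob {\<omega> \<in> space M. offdiag_exceeds (\<lambda>i. cell (k, i) \<omega>) (\<psi> ` I) x} = measure (distr M (\<Pi>\<^sub>M i\<in>I. borel) Y) A"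
    using measure_distr[OF Y A] by simp
  also have "distr M (\<Pi>\<^sub>M i\<in>I. borel) Y = (\<Pi>\<^sub>M i\<in>I. cell_distr)"
    unfolding Y_def using assms by (intro distr_cells_reindex) (auto simp: inj_on_def)
  finally show ?thesis
    unfolding A_def .
qed

definition exceed_prob :: "nat \<Rightarrow> real \<Rightarrow> real" where
  "exceed_prob q x = prob {\<omega> \<in> space M. offdiag_exceeds (\<lambda>i. cell (1, i) \<omega>) {1..q} x}"

lemma prob_row_exceeds:
  assumes "1 \<le> k" "finite S" "S \<subseteq> {1..}"
  shows "prob {\<omega> \<in> space M. offdiag_exceeds (\<lambda>i. cell (k, i) \<omega>) S x} = exceed_prob (card S) x"
proof (cases "S = {}")
  case True
  then show ?thesis
    by (simp add: exceed_prob_def offdiag_exceeds_def)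
next
  case False
  obtain \<psi> where \<psi>: "bij_betw \<psi> {1..card S} S"
    using ex_bij_betw_nat_finite_1[OF assms(2)] by blast
  have I: "{1..card S} \<noteq> {}"
    using False assms(2) by (simp add: Suc_le_eq card_gt_0_iff)
  have "prob {\<omega> \<in> space M. offdiag_exceeds (\<lambda>i. cell (k, i) \<omega>) S x}
      = measure (\<Pi>\<^sub>M i\<in>{1..card S}. cell_distr) {y \<in> space (\<Pi>\<^sub>M i\<in>{1..card S}. borel). offdiag_exceeds y {1..card S} x}"
    using prob_row_exceeds_eq_PiM[OF assms(1) I bij_betw_imp_inj_on[OF \<psi>],
        unfolded bij_betw_imp_surj_on[OF \<psi>], OF assms(3)] .
  also have "\<dots> = exceed_prob (card S) x"
    using prob_row_exceeds_eq_PiM[of 1 "{1..card S}" id x] I unfolding exceed_prob_def by simp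
  finally show ?thesis .
qed

lemma exceed_prob_nonneg: "0 \<le> exceed_prob q x"
  by (simp add: exceed_prob_def)

lemma exceed_prob_mono:
  "q \<le> q' \<Longrightarrow> x' \<le> x \<Longrightarrow> exceed_prob q x \<le> exceed_prob q' x'"
  unfolding exceed_prob_def
  by (intro finite_measure_mono sets_row_exceeds) (auto elim: offdiag_exceeds_mono)

lemma exceed_prob_block_bound:
  assumes "m \<le> L * h"
  shows "exceed_prob m x \<le> real (L * L) * exceed_prob (2 * h) x"
proof -
  define B where "B s = {s * h + 1..s * h + h}" for s
  define E where "E st = {\<omega> \<in> space M. offdiag_exceeds (\<lambda>i. cell (1, i) \<omega>) (B (fst st) \<union> B (snd st)) x}" for st
  have E: "E st \<in> events" for st
    unfolding E_def B_def by (intro sets_row_exceeds) auto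
  have "{\<omega> \<in> space M. offdiag_exceeds (\<lambda>i. cell (1, i) \<omega>) {1..m} x} \<subseteq> (\<Union>st\<in>{..<L} \<times> {..<L}. E st)"
  proof safe
    fix \<omega> assume "\<omega> \<in> space M" "offdiag_exceeds (\<lambda>i. cell (1, i) \<omega>) {1..m} x"
    then obtain i j where ij: "i \<in> {1..m}" "j \<in> {1..m}" "i \<noteq> j" "x \<le> \<bar>U 1 i \<omega> * V 1 j \<omega>\<bar>"
      by (auto simp: offdiag_exceeds_def)
    obtain s t where "s < L" "i \<in> B s" "t < L" "j \<in> B t"
      using ij(1,2) atLeastAtMost_subset_blocks[OF assms] unfolding B_def by blast
    with ij \<open>\<omega> \<in> space M\<close> show "\<omega> \<in> (\<Union>st\<in>{..<L} \<times> {..<L}. E st)"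
      unfolding E_def offdiag_exceeds_def by force
  qed
  then have "exceed_prob m x \<le> prob (\<Union>st\<in>{..<L} \<times> {..<L}. E st)"
    unfolding exceed_prob_def using E by (intro finite_measure_mono) auto
  also have "\<dots> \<le> (\<Sum>st\<in>{..<L} \<times> {..<L}. prob (E st))"
    using E by (intro finite_measure_subadditive_finite) auto
  also have "\<dots> \<le> (\<Sum>st\<in>{..<L} \<times> {..<L}. exceed_prob (2 * h) x)"
  proof (intro sum_mono)
    fix st
    have "card (B (fst st) \<union> B (snd st)) \<le> 2 * h"
      using card_Un_le[of "B (fst st)" "B (snd st)"] by (simp add: B_def)
    then show "prob (E st) \<le> exceed_prob (2 * h) x"
      unfolding E_def using exceed_prob_mono[of _ "2 * h" x x]
      by (subst prob_row_exceeds) (auto simp: B_def)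
  qed
  also have "\<dots> = real (L * L) * exceed_prob (2 * h) x"
    by simp
  finally show ?thesis .
qed

lemma indep_events_rows:
  assumes "\<And>n. S n \<subseteq> {1..}"
  shows "indep_events (\<lambda>n. {\<omega> \<in> space M. offdiag_exceeds (\<lambda>i. cell (Suc n, i) \<omega>) (S n) (x n)}) UNIV"
proof -
  define K where "K n = (\<lambda>i. (Suc n, i)) ` S n" for n
  have "indep_vars (\<lambda>n. \<Pi>\<^sub>M c\<in>K n. borel) (\<lambda>n \<omega>. \<lambda>c\<in>K n. cell c \<omega>) UNIV"
    by (intro indep_vars_restrict[OF indep_cells])
      (auto simp: K_def disjoint_family_on_def dest: subsetD[OF assms])
  then have "indep_events (\<lambda>n. {\<omega> \<in> space M. offdiag_exceeds (\<lambda>i. (\<lambda>c\<in>K n. cell c \<omega>) (Suc n, i)) (S n) (x n)}) UNIV"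
    by (rule indep_eventsI_indep_vars) (intro sets_offdiag_exceeds, auto simp: K_def)
  moreover have "offdiag_exceeds (\<lambda>i. (\<lambda>c\<in>K n. cell c \<omega>) (Suc n, i)) (S n) (x n)
      \<longleftrightarrow> offdiag_exceeds (\<lambda>i. cell (Suc n, i) \<omega>) (S n) (x n)" for n \<omega>
    by (intro offdiag_exceeds_cong) (simp add: K_def)
  ultimately show ?thesis
    by simp
qed

lemma summable_prob_rows:
  assumes x_nonneg: "\<forall>\<^sub>F n in sequentially. 0 \<le> x n"
    and bounded: "AE \<omega> in M. \<exists>C. \<forall>\<^sub>F n in sequentially.
                    \<not> offdiag_exceeds (\<lambda>i. cell (n, i) \<omega>) {1..q n} (C * x n)"
  shows "\<exists>C. summable (\<lambda>n. prob {\<omega> \<in> space M. offdiag_exceeds (\<lambda>i. cell (n, i) \<omega>) {1..q n} (C * x n)})"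
proof (rule ccontr)
  define E where "E C n = {\<omega> \<in> space M. offdiag_exceeds (\<lambda>i. cell (n, i) \<omega>) {1..q n} (C * x n)}" for C n
  assume "\<not> (\<exists>C. summable (\<lambda>n. prob (E C n)))"
  then have "\<not> summable (\<lambda>n. prob (E C (Suc n)))" for C
    using summable_Suc_iff[of "\<lambda>n. prob (E C n)"] by blast
  then have "AE \<omega> in M. \<exists>\<^sub>F n in sequentially. \<omega> \<in> E C (Suc n)" for C
    unfolding E_def by (intro borel_cantelli_AE2 indep_events_rows) auto
  moreover have "(\<exists>\<^sub>F n in sequentially. \<omega> \<in> E C (Suc n)) \<longleftrightarrow> (\<exists>\<^sub>F n in sequentially. \<omega> \<in> E C n)" for \<omega> C
    unfolding frequently_def using eventually_sequentially_Suc[of "\<lambda>n. \<omega> \<notin> E C n"] by simp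
  ultimately have "AE \<omega> in M. \<forall>C::nat. \<exists>\<^sub>F n in sequentially. \<omega> \<in> E C n"
    by (simp add: AE_all_countable)
  then have "AE \<omega> in M. False"
    using bounded
  proof eventually_elim
    case (elim \<omega>)
    then obtain C where C: "\<forall>\<^sub>F n in sequentially.
        \<not> offdiag_exceeds (\<lambda>i. cell (n, i) \<omega>) {1..q n} (C * x n)"
      by blast
    have "\<forall>\<^sub>F n in sequentially.
        \<omega> \<in> E (nat \<lceil>C\<rceil>) n \<longrightarrow> offdiag_exceeds (\<lambda>i. cell (n, i) \<omega>) {1..q n} (C * x n)"
      using x_nonneg
    proof eventually_elim
      case (elim n)
      then have "C * x n \<le> real (nat \<lceil>C\<rceil>) * x n"
        by (intro mult_right_mono real_nat_ceiling_ge)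
      then show ?case
        unfolding E_def by (blast intro: offdiag_exceeds_mono)
    qed
    then have "\<exists>\<^sub>F n in sequentially. offdiag_exceeds (\<lambda>i. cell (n, i) \<omega>) {1..q n} (C * x n)"
      by (rule frequently_mp[OF _ elim(1)[rule_format, of "nat \<lceil>C\<rceil>"]])
    with C show False
      by (simp add: frequently_def)
  qed
  then show False
    by simp
qed

lemma indep_var_cells:
  assumes "c \<in> cells" "d \<in> cells" "c \<noteq> d"
  shows "indep_var borel (cell c) borel (cell d)"
proof -
  define \<phi> where "\<phi> = case_bool c d"
  have "\<phi> ` UNIV \<subseteq> cells" "inj \<phi>"
    using assms by (auto simp: \<phi>_def inj_def split: bool.split)
  then have "indep_vars (\<lambda>_. borel) (\<lambda>b. cell (\<phi> b)) UNIV"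
    using indep_vars_reindex[OF indep_vars_subset[OF indep_cells]] by blast
  also have "(\<lambda>b. cell (\<phi> b)) = case_bool (cell c) (cell d)"
    by (simp add: \<phi>_def fun_eq_iff split: bool.split)
  also have "(\<lambda>_::bool. borel :: (real \<times> real) measure) = case_bool borel borel"
    by (simp add: fun_eq_iff split: bool.split)
  finally show ?thesis
    unfolding indep_var_def .
qed

lemma distr_offdiag_product:
  assumes "1 \<le> k"
  shows "distr M borel (\<lambda>\<omega>. U k 1 \<omega> * V k 2 \<omega>) = distr M borel (\<lambda>\<omega>. U 1 1 \<omega> * V 1 2 \<omega>)"
proof -
  define I :: "nat set" where "I = {1, 2}"
  define g where "g y = fst (y 1) * snd (y 2)" for y :: "nat \<Rightarrow> real \<times> real"
  have fst: "fst \<in> borel_measurable (borel :: (real \<times> real) measure)"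
    and snd: "snd \<in> borel_measurable (borel :: (real \<times> real) measure)"
    unfolding borel_prod[symmetric] by measurable
  have component: "(\<lambda>y. y i) \<in> measurable (\<Pi>\<^sub>M i\<in>I. borel) (borel :: (real \<times> real) measure)"
    if "i \<in> I" for i
    using measurable_component_singleton[OF that, of "\<lambda>_. borel"] .
  have g: "g \<in> borel_measurable (\<Pi>\<^sub>M i\<in>I. borel)"
    unfolding g_def
    using measurable_compose[OF component fst, of 1] measurable_compose[OF component snd, of 2]
    by (intro borel_measurable_times) (simp_all add: I_def)
  have "distr M borel (\<lambda>\<omega>. U j 1 \<omega> * V j 2 \<omega>) = distr (\<Pi>\<^sub>M i\<in>I. cell_distr) borel g" if "1 \<le> j" for j
  proof -
    have Y: "(\<lambda>\<omega>. \<lambda>i\<in>I. cell (j, i) \<omega>) \<in> measurable M (\<Pi>\<^sub>M i\<in>I. borel)"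
      using that by (intro measurable_restrict measurable_cell) (auto simp: I_def)
    have "distr M borel (\<lambda>\<omega>. U j 1 \<omega> * V j 2 \<omega>) = distr M borel (\<lambda>\<omega>. g (\<lambda>i\<in>I. cell (j, i) \<omega>))"
      by (simp add: g_def I_def)
    also have "\<dots> = distr (distr M (\<Pi>\<^sub>M i\<in>I. borel) (\<lambda>\<omega>. \<lambda>i\<in>I. cell (j, i) \<omega>)) borel g"
      using distr_distr[OF g Y] by (simp add: comp_def)
    also have "\<dots> = distr (\<Pi>\<^sub>M i\<in>I. cell_distr) borel g"
      using that by (subst distr_cells_reindex) (auto simp: I_def inj_on_def)
    finally show ?thesis .
  qed
  from this[OF assms] this[of 1] show ?thesis
    by simp
qed

lemma expectation_U_mult_expectation_V_eq_0:
  assumes "AE \<omega> in M. (\<lambda>n. (\<Sum>k=1..n. U k 1 \<omega> * V k 2 \<omega>) / n) \<longlonglongrightarrow> 0"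
  shows "expectation (U 1 1) * expectation (V 1 1) = 0"
proof (cases "integrable M (U 1 1) \<and> integrable M (V 1 1)")
  case True
  have fst: "fst \<in> borel_measurable (borel :: (real \<times> real) measure)"
    and snd: "snd \<in> borel_measurable (borel :: (real \<times> real) measure)"
    unfolding borel_prod[symmetric] by measurable
  have distr_12: "distr M borel (cell (1, 2)) = distr M borel (cell (1, 1))"
    using distr_cell[of "(1, 2)"] by (simp add: cell_distr_def)
  have "integrable M (V 1 2)" "expectation (V 1 2) = expectation (V 1 1)"
    using integrable_comp_eq_if_distr_eq[OF measurable_cell measurable_cell distr_12 snd]
      integral_comp_eq_if_distr_eq[OF measurable_cell measurable_cell distr_12 snd] True
    by simp_all
  moreover have "indep_var borel (U 1 1) borel (V 1 2)"
    using indep_var_compose[OF indep_var_cells[of "(1, 1)" "(1, 2)"] fst snd] by (simp add: comp_def)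
  ultimately have int: "integrable M (\<lambda>\<omega>. U 1 1 \<omega> * V 1 2 \<omega>)"
    and "expectation (\<lambda>\<omega>. U 1 1 \<omega> * V 1 2 \<omega>) = expectation (U 1 1) * expectation (V 1 1)"
    using True indep_var_integrable[of "U 1 1" "V 1 2"] indep_var_lebesgue_integral[of "U 1 1" "V 1 2"]
    by simp_all
  moreover have "random_variable borel (\<lambda>\<omega>. U k 1 \<omega> * V k 2 \<omega>)" if "1 \<le> k" for k
    using measurable_U_V[OF that, of 1] measurable_U_V[OF that, of 2] by simp
  then have "expectation (\<lambda>\<omega>. U 1 1 \<omega> * V 1 2 \<omega>) = 0"
    using expectation_eq_0_if_averages_tendsto_0[of "\<lambda>k \<omega>. U k 1 \<omega> * V k 2 \<omega>",
        OF _ distr_offdiag_product int assms]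
    by blast
  ultimately show ?thesis
    by simp
qed (auto simp: not_integrable_integral_eq)

lemma summable_prob_Mstat_ge:
  fixes a :: "nat \<Rightarrow> real" and p h :: "nat \<Rightarrow> nat"
  assumes bounded: "AE \<omega> in M. \<exists>B>0. \<forall>\<^sub>F n in sequentially. Tstat U V (p n) n \<omega> \<le> B * a n"
    and h: "0 < c" "\<forall>\<^sub>F n in sequentially. c * real n \<le> real (h n)"
      "\<forall>\<^sub>F n in sequentially. 2 * h n \<le> p n \<and> 2 * h n \<le> p (n - 1)"
    and a_pos: "\<And>n. 1 \<le> n \<Longrightarrow> 0 < a n"
    and a_mono: "\<And>m n. 1 \<le> m \<Longrightarrow> m \<le> n \<Longrightarrow> a m \<le> a n"
    and doubling: "1 < \<beta>" "\<forall>\<^sub>F n in sequentially. \<beta> * a n \<le> a (2 * n)"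
  shows "summable (\<lambda>n. measure M {\<omega> \<in> space M. a n \<le> Mstat U V n \<omega>})"
proof -
  have a_eventually: "\<forall>\<^sub>F n in sequentially. 0 < a n \<and> a (n - 1) \<le> a n"
    using a_pos a_mono by (intro eventually_sequentiallyI[of 2]) auto
  have "\<forall>\<^sub>F n in sequentially. 0 \<le> a n"
    using a_eventually by eventually_elim simp
  moreover have "AE \<omega> in M. \<exists>C. \<forall>\<^sub>F n in sequentially.
      \<not> offdiag_exceeds (\<lambda>i. cell (n, i) \<omega>) {1..2 * h n} (C * a n)"
    using bounded
  proof eventually_elim
    case (elim \<omega>)
    then obtain B where "0 < B" "\<forall>\<^sub>F n in sequentially. Tstat U V (p n) n \<omega> \<le> B * a n"
      by blast
    from eventually_not_offdiag_exceeds_if_Tstat_le[OF this(2) _ h(3) a_eventually] this(1)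
    show ?case
      by auto
  qed
  ultimately obtain C where "summable (\<lambda>n. prob {\<omega> \<in> space M. offdiag_exceeds (\<lambda>i. cell (n, i) \<omega>) {1..2 * h n} (C * a n)})"
    using summable_prob_rows[of a "\<lambda>n. 2 * h n"] by blast
  moreover have "\<forall>\<^sub>F n in sequentially. prob {\<omega> \<in> space M. offdiag_exceeds (\<lambda>i. cell (n, i) \<omega>) {1..2 * h n} (C * a n)}
      = exceed_prob (2 * h n) (C * a n)"
    using prob_row_exceeds[of _ "{1..2 * h _}"] by (intro eventually_sequentiallyI[of 1]) simp
  ultimately have "summable (\<lambda>n. exceed_prob (2 * h n) (C * a n))"
    using summable_cong by fastforce
  then have "summable (\<lambda>n. exceed_prob n (a n))"
    using exceed_prob_nonneg exceed_prob_mono exceed_prob_block_bound a_pos a_mono doubling h(1,2)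
    by (intro summable_transfer_doubling[where F = exceed_prob]) auto
  moreover have "\<forall>\<^sub>F n in sequentially. exceed_prob n (a n) = measure M {\<omega> \<in> space M. a n \<le> Mstat U V n \<omega>}"
    using a_pos by (intro eventually_sequentiallyI[of 1]) (simp add: exceed_prob_def Mstat_ge_iff)
  ultimately show ?thesis
    using summable_cong by fastforce
qed

end

theorem lemma3p2:
  fixes M :: "'a measure"
    and U V :: "nat \<Rightarrow> nat \<Rightarrow> 'a \<Rightarrow> real"
    and p :: "nat \<Rightarrow> nat"
    and a :: "nat \<Rightarrow> real"
  assumes "prob_space M"
    and indep: "prob_space.indep_vars M (\<lambda>_. borel :: (real \<times> real) measure)
                  (\<lambda>(k, i) \<omega>. (U k i \<omega>, V k i \<omega>)) {(k, i). 1 \<le> k \<and> 1 \<le> i}"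
    and ident: "\<And>k i. 1 \<le> k \<Longrightarrow> 1 \<le> i \<Longrightarrow>
                  distr M (borel :: (real \<times> real) measure) (\<lambda>\<omega>. (U k i \<omega>, V k i \<omega>)) =
                  distr M (borel :: (real \<times> real) measure) (\<lambda>\<omega>. (U 1 1 \<omega>, V 1 1 \<omega>))"
    and p_pos: "\<And>n. 1 \<le> n \<Longrightarrow> 0 < p n"
    and p_bounds: "\<exists>c C. 0 < c \<and>
                     (\<forall>n\<ge>1. c \<le> real n / real (p n) \<and> real n / real (p n) \<le> C)"
    and a_pos: "\<And>n. 1 \<le> n \<Longrightarrow> 0 < a n"
    and a_mono: "\<And>n. 1 \<le> n \<Longrightarrow> a n \<le> a (Suc n)"
    and a_ratio: "(\<lambda>n. a (Suc n) / a n) \<longlonglongrightarrow> 1"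
    and a_doubling: "liminf (\<lambda>n. ereal (a (2 * n) / a n)) > 1"
    and limsup_fin: "AE \<omega> in M. limsup (\<lambda>n. ereal (Tstat U V (p n) n \<omega> / a n)) < \<infinity>"
  shows "summable (\<lambda>n. measure M {\<omega> \<in> space M. Mstat U V n \<omega> \<ge> a n})
         \<and> (((\<lambda>n. a n / real n) \<longlonglongrightarrow> 0) \<longrightarrow>
              (integral\<^sup>L M (U 1 1)) * (integral\<^sup>L M (V 1 1)) = 0)"
proof
  interpret iid_pair_array M U V
    using iid_pair_array.intro[OF assms(1) iid_pair_array_axioms.intro[OF indep ident]] .
  obtain c C where c: "0 < c" and C: "\<And>n. 1 \<le> n \<Longrightarrow> c \<le> real n / real (p n) \<and> real n / real (p n) \<le> C"
    using p_bounds by blast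
  have "0 < C"
    using c C[of 1] by linarith
  then obtain h c' where h: "0 < c'" "\<forall>\<^sub>F n in sequentially. c' * real n \<le> real (h n)"
      "\<forall>\<^sub>F n in sequentially. 2 * h n \<le> p n \<and> 2 * h n \<le> p (n - 1)"
    using linear_block_sizes[of C p] p_pos C by blast
  have a_eventually_pos: "\<forall>\<^sub>F n in sequentially. 0 < a n"
    using a_pos by (intro eventually_sequentiallyI[of 1])
  have bounded: "AE \<omega> in M. \<exists>B>0. \<forall>\<^sub>F n in sequentially. Tstat U V (p n) n \<omega> \<le> B * a n"
    using limsup_fin by eventually_elim (rule limsup_lt_infinity_imp_eventually_le[OF _ a_eventually_pos])
  obtain \<beta> where \<beta>: "1 < \<beta>" "\<forall>\<^sub>F n in sequentially. \<beta> * a n \<le> a (2 * n)"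
    using eventually_doubling_if_liminf_gt_1[OF a_doubling a_eventually_pos] by blast
  have "a m \<le> a n" if "1 \<le> m" "m \<le> n" for m n
    by (rule lift_Suc_mono_le_ivl[of "{1..}"]) (use a_mono that in auto)
  from summable_prob_Mstat_ge[OF bounded h a_pos this \<beta>]
  show "summable (\<lambda>n. measure M {\<omega> \<in> space M. Mstat U V n \<omega> \<ge> a n})" .
  show "((\<lambda>n. a n / real n) \<longlonglongrightarrow> 0) \<longrightarrow> integral\<^sup>L M (U 1 1) * integral\<^sup>L M (V 1 1) = 0"
  proof
    assume a_lim: "(\<lambda>n. a n / real n) \<longlonglongrightarrow> 0"
    have p_ge_2: "\<forall>\<^sub>F n in sequentially. 2 \<le> p n"
      using h(2,3) eventually_ge_at_top[of "nat \<lceil>1 / c'\<rceil>"]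
    proof eventually_elim
      case (elim n)
      then have "1 \<le> c' * real n"
        using h(1) by (simp add: divide_le_eq mult.commute)
      with elim show ?case
        by linarith
    qed
    have "AE \<omega> in M. (\<lambda>n. (\<Sum>k=1..n. U k 1 \<omega> * V k 2 \<omega>) / n) \<longlonglongrightarrow> 0"
      using bounded
    proof eventually_elim
      case (elim \<omega>)
      then obtain B where "\<forall>\<^sub>F n in sequentially. Tstat U V (p n) n \<omega> \<le> B * a n"
        by blast
      from averages_tendsto_0_if_Tstat_le[OF this p_ge_2 a_lim] show ?case .
    qed
    then show "integral\<^sup>L M (U 1 1) * integral\<^sup>L M (V 1 1) = 0"
      by (rule expectation_U_mult_expectation_V_eq_0)
  qed
qed

end
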